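(* Let $p\in(0,1)$, $q=1-p$, $\alpha\in(0,1)$. Let $\{N(t)\}_{t\in\mathbb{N}_0}$ be the Bernoulli counting process with parameter $p$, i.e. $N(t)=\max\{n\in\mathbb{N}_0:M_0+\dots+M_{n-1}\le t\}$ with $M_0,M_1,\dots$ i.i.d., $P(M_i=k)=pq^{k-1}$, $k\in\mathbb{N}$. Let $\{L_\alpha(t)\}_{t\in\mathbb{N}_0}$ be an independent Sibuya counting process: $L_\alpha(t)=\max\{n\in\mathbb{N}_0:Z_1+\dots+Z_n\le t\}$ with $Z_j$ i.i.d., $P(Z_j=k)=(-1)^{k-1}\binom{\alpha}{k}$, $k\in\mathbb{N}$. Let $\{N_A(t)\}_{t\in\mathbb{N}_0}$ be the fractional Bernoulli counting process of type A: $N_A(t)=\max\{n\in\mathbb{N}_0:J^A_0+\dots+J^A_{n-1}\le t\}$, where $J^A_0,J^A_1,\dots$ are i.i.d. with the discrete Mittag--Leffler distribution of type A, i.e. $J^A\overset{d}{=}\sum_{k=1}^MZ_k$ with $M$ geometric, $P(M=k)=pq^{k-1}$, independent of the i.i.d. Sibuya$(\alpha)$ variables $Z_k$; equivalently $\mathbb{E}u^{J^A}=\dfrac{1-(1-u)^\alpha}{1+\frac{q}{p}(1-u)^\alpha}$. Then for each $t\in\mathbb{N}_0$, $N_A(t)\overset{d}{=}N(L_\alpha(t))$.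
   Context: $\mathbb{N}_0=\mathbb{N}\cup\{0\}$; $\binom{\alpha}{k}=\alpha(\alpha-1)\cdots(\alpha-k+1)/k!$; empty sums are $0$. *)

theory Defs
  imports "HOL-Probability.Probability"
begin

definition geom1_pmf :: "real \<Rightarrow> nat pmf" where
  "geom1_pmf p = embed_pmf (\<lambda>k. if k \<ge> 1 then p * (1 - p) ^ (k - 1) else 0)"

definition sibuya_pmf :: "real \<Rightarrow> nat pmf" where
  "sibuya_pmf \<alpha> = embed_pmf (\<lambda>k. if k \<ge> 1 then (-1) ^ (k - 1) * (\<alpha> gchoose k) else 0)"

fun sum_iid_pmf :: "nat pmf \<Rightarrow> nat \<Rightarrow> nat pmf" where
  "sum_iid_pmf d 0 = return_pmf 0"
| "sum_iid_pmf d (Suc n) = bind_pmf d (\<lambda>x. map_pmf (\<lambda>y. x + y) (sum_iid_pmf d n))"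

definition dml_A_pmf :: "real \<Rightarrow> real \<Rightarrow> nat pmf" where
  "dml_A_pmf p \<alpha> = bind_pmf (geom1_pmf p) (\<lambda>m. sum_iid_pmf (sibuya_pmf \<alpha>) m)"

definition count_proc :: "nat stream \<Rightarrow> nat \<Rightarrow> nat" where
  "count_proc \<omega> t = Max {n. (\<Sum>i<n. \<omega> !! i) \<le> t}"

end

theory Submission
  imports Defs
begin

text \<open>For a renewal process whose interarrival times are at least 1, \<open>N(t) = k\<close> holds iff
  \<open>S\<^sub>k \<le> t < S\<^sub>k + X\<^sub>k\<close>, where the partial sum \<open>S\<^sub>k\<close> and the next interarrival time
  \<open>X\<^sub>k\<close> are independent. For the subordinated process \<open>N(L(t))\<close> with interarrival laws \<open>d\<close>
  (outer) and \<open>e\<close> (inner) this becomes \<open>B \<le> L(t) < B + X\<close> with \<open>B \<sim> d\<^sup>*\<^sup>k\<close>, \<open>X \<sim> d\<close>,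
  i.e. \<open>A \<le> t < A + C\<close>, where \<open>A\<close> and \<open>C\<close> are sums of the inner interarrival times over the
  disjoint blocks of lengths \<open>B\<close> and \<open>X\<close>, so \<open>A \<sim> e\<^sup>*\<^sup>B\<close> and \<open>C \<sim> e\<^sup>*\<^sup>X\<close> independently.
  On the other hand the \<open>k\<close>-fold convolution of the compound law \<open>J = Z\<^sub>1 + \<dots> + Z\<^sub>M\<close>
  (\<open>M \<sim> d\<close>, \<open>Z\<^sub>i \<sim> e\<close>) is the compound \<open>e\<^sup>*\<^sup>B\<close> with \<open>B \<sim> d\<^sup>*\<^sup>k\<close>, so the renewal process
  with interarrival law \<open>J\<close> gives the same probability. The theorem is the case of geometric \<open>d\<close>
  and Sibuya \<open>e\<close>; the only facts needed about these laws are that they are probability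
  distributions on the positive integers.\<close>

lemma pmf_embed_pmf_sums:
  fixes f :: "nat \<Rightarrow> real"
  assumes "\<And>k. 0 \<le> f k" and "f sums 1"
  shows "pmf (embed_pmf f) k = f k"
proof (rule pmf_embed_pmf)
  show "(\<integral>\<^sup>+k. ennreal (f k) \<partial>count_space UNIV) = 1"
    using assms by (simp add: nn_integral_count_space_nat suminf_ennreal2 sums_iff)
qed (use assms in simp)

lemma set_pmf_subset_atLeast_1:
  fixes d :: "nat pmf"
  assumes "pmf d 0 = 0"
  shows "set_pmf d \<subseteq> {1..}"
proof
  fix x assume "x \<in> set_pmf d"
  then have "x \<noteq> 0" by (metis assms set_pmf_iff)
  then show "x \<in> {1..}" by simp
qed

lemma pmf_geom1_pmf:
  assumes "0 < p" "p < 1"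
  shows "pmf (geom1_pmf p) k = (if k \<ge> 1 then p * (1 - p) ^ (k - 1) else 0)"
  unfolding geom1_pmf_def
proof (rule pmf_embed_pmf_sums)
  let ?f = "\<lambda>k::nat. if k \<ge> 1 then p * (1 - p) ^ (k - 1) else 0"
  have "(\<lambda>k. p * (1 - p) ^ k) sums (p * (1 / (1 - (1 - p))))"
    using assms by (intro sums_mult geometric_sums) auto
  then show "?f sums 1"
    using assms sums_Suc_iff[of ?f 1] by simp
qed (use assms in simp)

lemma set_pmf_geom1_pmf:
  assumes "0 < p" "p < 1"
  shows "set_pmf (geom1_pmf p) \<subseteq> {1..}"
  by (rule set_pmf_subset_atLeast_1) (simp add: pmf_geom1_pmf assms)

lemma gbinomial_Suc_eq:
  fixes a :: "'a :: field_char_0"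
  shows "of_nat (Suc k) * (a gchoose Suc k) = (a - of_nat k) * (a gchoose k)"
  by (simp only: gbinomial_absorption gbinomial_absorb_comp)

text \<open>\<open>P(Z > m)\<close> for \<open>Z\<close> Sibuya-distributed with parameter \<open>\<alpha>\<close>.\<close>
definition sibuya_tail :: "real \<Rightarrow> nat \<Rightarrow> real" where
  "sibuya_tail \<alpha> m = (\<Prod>j<m. 1 - \<alpha> / (real j + 1))"

lemma sibuya_weight_Suc:
  "(-1) ^ m * (\<alpha> gchoose Suc m) = \<alpha> / (real m + 1) * sibuya_tail \<alpha> m"
proof (induction m)
  case (Suc m)
  have rec: "\<alpha> gchoose Suc (Suc m) = (\<alpha> - real m - 1) / (real m + 2) * (\<alpha> gchoose Suc m)"
    using gbinomial_Suc_eq[of "Suc m" \<alpha>] by (simp add: field_simps)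
  have "(-1) ^ Suc m * (\<alpha> gchoose Suc (Suc m))
      = (real m + 1 - \<alpha>) / (real m + 2) * ((-1) ^ m * (\<alpha> gchoose Suc m))"
    unfolding rec by (simp add: field_simps)
  also have "\<dots> = \<alpha> / (real (Suc m) + 1) * sibuya_tail \<alpha> (Suc m)"
    unfolding Suc by (simp add: sibuya_tail_def field_simps)
  finally show ?case .
qed (simp add: sibuya_tail_def)

lemma sibuya_tail_nonneg:
  assumes "\<alpha> < 1"
  shows "0 \<le> sibuya_tail \<alpha> m"
  using assms unfolding sibuya_tail_def by (auto simp: field_simps intro!: prod_nonneg)

lemma sibuya_tail_tendsto_0:
  assumes "0 < \<alpha>" "\<alpha> < 1"
  shows "sibuya_tail \<alpha> \<longlonglongrightarrow> 0"
proof (rule tendsto_sandwich[where f="\<lambda>_. 0" and h="\<lambda>m. exp (- \<alpha> * harm m)"])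
  show "\<forall>\<^sub>F m in sequentially. 0 \<le> sibuya_tail \<alpha> m"
    using sibuya_tail_nonneg assms by simp
  have "sibuya_tail \<alpha> m \<le> exp (- \<alpha> * harm m)" for m
  proof -
    have "sibuya_tail \<alpha> m \<le> (\<Prod>j<m. exp (- (\<alpha> / (real j + 1))))"
      unfolding sibuya_tail_def
      using assms exp_ge_add_one_self[of "- (\<alpha> / (real _ + 1))"]
      by (intro prod_mono) (auto simp: field_simps)
    also have "\<dots> = exp (- \<alpha> * harm m)"
      by (simp add: exp_sum[symmetric] harm_altdef sum_distrib_left sum_negf field_simps)
    finally show ?thesis .
  qed
  then show "\<forall>\<^sub>F m in sequentially. sibuya_tail \<alpha> m \<le> exp (- \<alpha> * harm m)"
    by simp
  have "filterlim (\<lambda>m. \<alpha> * harm m) at_top sequentially"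
    using assms by (intro filterlim_tendsto_pos_mult_at_top[OF tendsto_const] harm_at_top) auto
  then show "(\<lambda>m. exp (- \<alpha> * harm m)) \<longlonglongrightarrow> 0"
    by (auto intro: filterlim_compose[OF exp_at_bot] simp: filterlim_uminus_at_top)
qed simp

lemma pmf_sibuya_pmf:
  assumes "0 < \<alpha>" "\<alpha> < 1"
  shows "pmf (sibuya_pmf \<alpha>) k = (if k \<ge> 1 then (-1) ^ (k - 1) * (\<alpha> gchoose k) else 0)"
  unfolding sibuya_pmf_def
proof (rule pmf_embed_pmf_sums)
  let ?f = "\<lambda>k::nat. if k \<ge> 1 then (-1) ^ (k - 1) * (\<alpha> gchoose k) else 0"
  have f_Suc: "?f (Suc m) = sibuya_tail \<alpha> m - sibuya_tail \<alpha> (Suc m)" for m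
    using sibuya_weight_Suc[of m \<alpha>] by (simp add: sibuya_tail_def field_simps)
  show "0 \<le> ?f k" for k
  proof (cases k)
    case (Suc m)
    then show ?thesis
      using assms sibuya_tail_nonneg[of \<alpha> m] sibuya_weight_Suc[of m \<alpha>] by simp
  qed simp
  have "(\<lambda>m. ?f (Suc m)) sums (sibuya_tail \<alpha> 0 - 0)"
    unfolding f_Suc by (intro telescope_sums' sibuya_tail_tendsto_0 assms)
  then show "?f sums 1"
    by (subst (asm) sums_Suc_iff) (simp add: sibuya_tail_def)
qed

lemma set_pmf_sibuya_pmf:
  assumes "0 < \<alpha>" "\<alpha> < 1"
  shows "set_pmf (sibuya_pmf \<alpha>) \<subseteq> {1..}"
  by (rule set_pmf_subset_atLeast_1) (simp add: pmf_sibuya_pmf assms)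

lemma sum_iid_pmf_add:
  "sum_iid_pmf d (m + n) = bind_pmf (sum_iid_pmf d m) (\<lambda>u. map_pmf (\<lambda>v. u + v) (sum_iid_pmf d n))"
proof (induction m)
  case 0
  have "(+) (0::nat) = id" by auto
  then show ?case by (simp add: bind_return_pmf pmf.map_id)
next
  case (Suc m)
  then show ?case
    by (simp add: bind_assoc_pmf map_bind_pmf bind_map_pmf pmf.map_comp o_def add.assoc
        cong: bind_pmf_cong pmf.map_cong)
qed

lemma sum_iid_pmf_1: "sum_iid_pmf d 1 = d"
  by (simp add: bind_return_pmf')

lemma sum_iid_pmf_compound:
  "sum_iid_pmf (bind_pmf d (sum_iid_pmf e)) k = bind_pmf (sum_iid_pmf d k) (sum_iid_pmf e)"
proof (induction k)
  case (Suc k)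
  have "sum_iid_pmf (bind_pmf d (sum_iid_pmf e)) (Suc k) =
     bind_pmf d (\<lambda>m. bind_pmf (sum_iid_pmf e m) (\<lambda>u. bind_pmf (sum_iid_pmf d k)
       (\<lambda>n. map_pmf ((+) u) (sum_iid_pmf e n))))"
    by (simp add: Suc bind_assoc_pmf map_bind_pmf)
  also have "\<dots> = bind_pmf d (\<lambda>m. bind_pmf (sum_iid_pmf d k) (\<lambda>n. bind_pmf (sum_iid_pmf e m)
       (\<lambda>u. map_pmf ((+) u) (sum_iid_pmf e n))))"
    by (subst bind_commute_pmf) simp
  also have "\<dots> = bind_pmf (sum_iid_pmf d (Suc k)) (sum_iid_pmf e)"
    by (simp add: sum_iid_pmf_add bind_assoc_pmf bind_map_pmf)
  finally show ?case .
qed (simp add: bind_return_pmf)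

lemma set_pmf_sum_iid_pmf:
  assumes "set_pmf d \<subseteq> {1..}"
  shows "set_pmf (sum_iid_pmf d n) \<subseteq> {n..}"
  using assms by (induction n) (auto, fastforce)

lemma set_pmf_compound:
  assumes "set_pmf d \<subseteq> {1..}" "set_pmf e \<subseteq> {1..}"
  shows "set_pmf (bind_pmf d (sum_iid_pmf e)) \<subseteq> {1..}"
proof
  fix x assume "x \<in> set_pmf (bind_pmf d (sum_iid_pmf e))"
  then obtain m where m: "m \<in> set_pmf d" "x \<in> set_pmf (sum_iid_pmf e m)" by auto
  have "1 \<le> m" "m \<le> x"
    using m assms set_pmf_sum_iid_pmf[OF assms(2), of m] by auto
  then show "x \<in> {1..}" by simp
qed

lemma measurable_sum_snth [measurable]:
  fixes d :: "nat pmf"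
  shows "(\<lambda>\<omega>. \<Sum>i<k. \<omega> !! i) \<in> measurable (stream_space (measure_pmf d)) (count_space UNIV)"
proof (induction k)
  case (Suc k)
  have "(\<lambda>\<omega>. (\<lambda>a \<omega>. a + \<omega> !! k) (\<Sum>i<k. \<omega> !! i) \<omega>)
      \<in> measurable (stream_space (measure_pmf d)) (count_space UNIV)"
  proof (rule measurable_compose_countable'[OF _ Suc.IH])
    show "(\<lambda>\<omega>. a + \<omega> !! k) \<in> measurable (stream_space (measure_pmf d)) (count_space UNIV)" for a
      by (rule measurable_compose[OF measurable_snth]) simp
  qed simp
  then show ?case by simp
qed simp

lemma measurable_count_proc [measurable]:
  "(\<lambda>\<omega>. count_proc \<omega> t) \<in> measurable (stream_space (measure_pmf d)) (count_space UNIV)"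
  unfolding count_proc_def by measurable

lemma nn_integral_stream_space_sum_sdrop:
  fixes f :: "nat \<Rightarrow> nat stream \<Rightarrow> ennreal"
  assumes "\<And>a. f a \<in> borel_measurable (stream_space (measure_pmf d))"
  shows "(\<integral>\<^sup>+\<omega>. f (\<Sum>i<k. \<omega> !! i) (sdrop k \<omega>) \<partial>stream_space (measure_pmf d)) =
         (\<integral>\<^sup>+a. (\<integral>\<^sup>+\<omega>. f a \<omega> \<partial>stream_space (measure_pmf d)) \<partial>sum_iid_pmf d k)"
  using assms
proof (induction k arbitrary: f)
  case (Suc k)
  have "(\<lambda>\<omega>. f (\<Sum>i<Suc k. \<omega> !! i) (sdrop (Suc k) \<omega>)) \<in> borel_measurable (stream_space (measure_pmf d))"
    by (rule measurable_compose_countable'[where f="\<lambda>a \<omega>. f a (sdrop (Suc k) \<omega>)" and I=UNIV])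
      (auto intro: measurable_compose[OF _ Suc.prems] simp del: sum.lessThan_Suc)
  then have "(\<integral>\<^sup>+\<omega>. f (\<Sum>i<Suc k. \<omega> !! i) (sdrop (Suc k) \<omega>) \<partial>stream_space (measure_pmf d)) =
     (\<integral>\<^sup>+x. (\<integral>\<^sup>+\<omega>. f (\<Sum>i<Suc k. (x ## \<omega>) !! i) (sdrop (Suc k) (x ## \<omega>))
       \<partial>stream_space (measure_pmf d)) \<partial>d)"
    by (rule prob_space.nn_integral_stream_space[OF prob_space_measure_pmf])
  also have "\<dots> = (\<integral>\<^sup>+x. (\<integral>\<^sup>+\<omega>. f (x + (\<Sum>i<k. \<omega> !! i)) (sdrop k \<omega>) \<partial>stream_space (measure_pmf d)) \<partial>d)"
    by (simp only: sum.lessThan_Suc_shift) simp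
  also have "\<dots> = (\<integral>\<^sup>+x. (\<integral>\<^sup>+a. (\<integral>\<^sup>+\<omega>. f (x + a) \<omega> \<partial>stream_space (measure_pmf d)) \<partial>sum_iid_pmf d k) \<partial>d)"
    using Suc.prems by (intro nn_integral_cong Suc.IH)
  finally show ?case by simp
qed simp

lemma nn_integral_stream_space_sum:
  "(\<integral>\<^sup>+\<omega>. g (\<Sum>i<k. \<omega> !! i) \<partial>stream_space (measure_pmf d)) = (\<integral>\<^sup>+a. g a \<partial>sum_iid_pmf d k)"
proof -
  interpret prob_space "stream_space (measure_pmf d)"
    by (rule prob_space.prob_space_stream_space[OF prob_space_measure_pmf])
  show ?thesis
    using nn_integral_stream_space_sum_sdrop[where f="\<lambda>a _. g a" and d=d and k=k]
    by (simp add: emeasure_space_1)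
qed

lemma AE_stream_space_snth_ge_1:
  assumes "set_pmf d \<subseteq> {1..}"
  shows "AE \<omega> in stream_space (measure_pmf d). \<forall>i. 1 \<le> \<omega> !! i"
proof -
  have "AE \<omega> in stream_space (measure_pmf d). stream_all (\<lambda>x. 1 \<le> x) \<omega>"
    using assms
    by (intro prob_space.AE_stream_all[OF prob_space_measure_pmf]) (auto simp: AE_measure_pmf_iff)
  then show ?thesis unfolding stream_all_def by simp
qed

lemma count_proc_ge_iff:
  assumes "\<forall>i. 1 \<le> \<omega> !! i"
  shows "n \<le> count_proc \<omega> s \<longleftrightarrow> (\<Sum>i<n. \<omega> !! i) \<le> s"
proof -
  let ?A = "{n. (\<Sum>i<n. \<omega> !! i) \<le> s}"
  have "m \<le> (\<Sum>i<m. \<omega> !! i)" for m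
    using sum_mono[of "{..<m}" "\<lambda>_. 1::nat" "\<lambda>i. \<omega> !! i"] assms by simp
  then have "?A \<subseteq> {..s}"
    using le_trans by blast
  then have "finite ?A"
    by (rule finite_subset) simp
  moreover have "0 \<in> ?A" by simp
  ultimately have "n \<le> Max ?A \<longleftrightarrow> (\<exists>m\<in>?A. n \<le> m)"
    using Max_ge_iff[of ?A n] by blast
  also have "\<dots> \<longleftrightarrow> (\<Sum>i<n. \<omega> !! i) \<le> s"
  proof
    assume "\<exists>m\<in>?A. n \<le> m"
    then obtain m where "(\<Sum>i<m. \<omega> !! i) \<le> s" "n \<le> m" by blast
    then show "(\<Sum>i<n. \<omega> !! i) \<le> s"
      using sum_mono2[of "{..<m}" "{..<n}" "\<lambda>i. \<omega> !! i"] by simp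
  qed auto
  finally show ?thesis unfolding count_proc_def .
qed

lemma sum_snth_add:
  "(\<Sum>i<m + n. \<omega> !! i) = (\<Sum>i<m. \<omega> !! i) + (\<Sum>i<n. sdrop m \<omega> !! i)"
  by (induction n) (simp_all add: sdrop_snth add.assoc)

text \<open>\<open>b \<le> N(t) < b + x\<close> iff \<open>S\<^sub>b \<le> t < S\<^sub>b\<^sub>+\<^sub>x\<close>, and \<open>S\<^sub>b\<close>, \<open>S\<^sub>b\<^sub>+\<^sub>x - S\<^sub>b\<close> are sums over disjoint
  blocks of the stream.\<close>
lemma nn_integral_indicator_count_proc_interval:
  assumes "set_pmf d \<subseteq> {1..}"
  shows "(\<integral>\<^sup>+\<zeta>. indicator {b..<b + x} (count_proc \<zeta> t) \<partial>stream_space (measure_pmf d)) =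
    (\<integral>\<^sup>+a. (\<integral>\<^sup>+c. indicator {a..<a + c} t \<partial>sum_iid_pmf d x) \<partial>sum_iid_pmf d b)"
proof -
  have "(\<integral>\<^sup>+\<zeta>. indicator {b..<b + x} (count_proc \<zeta> t) \<partial>stream_space (measure_pmf d)) =
     (\<integral>\<^sup>+\<zeta>. indicator {\<Sum>i<b. \<zeta> !! i..<(\<Sum>i<b. \<zeta> !! i) + (\<Sum>i<x. sdrop b \<zeta> !! i)} t
       \<partial>stream_space (measure_pmf d))"
  proof (rule nn_integral_cong_AE, use AE_stream_space_snth_ge_1[OF assms] in eventually_elim)
    case (elim \<zeta>)
    have "b \<le> count_proc \<zeta> t \<and> count_proc \<zeta> t < b + x \<longleftrightarrow>
        (\<Sum>i<b. \<zeta> !! i) \<le> t \<and> t < (\<Sum>i<b. \<zeta> !! i) + (\<Sum>i<x. sdrop b \<zeta> !! i)"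
      using count_proc_ge_iff[OF elim, of b t] count_proc_ge_iff[OF elim, of "b + x" t]
      by (auto simp: sum_snth_add)
    then show ?case by (simp split: split_indicator)
  qed
  also have "\<dots> = (\<integral>\<^sup>+a. (\<integral>\<^sup>+\<zeta>. indicator {a..<a + (\<Sum>i<x. \<zeta> !! i)} t
       \<partial>stream_space (measure_pmf d)) \<partial>sum_iid_pmf d b)"
    by (rule nn_integral_stream_space_sum_sdrop[where f="\<lambda>a \<zeta>. indicator {a..<a + (\<Sum>i<x. \<zeta> !! i)} t"])
      measurable
  also have "\<dots> = (\<integral>\<^sup>+a. (\<integral>\<^sup>+c. indicator {a..<a + c} t \<partial>sum_iid_pmf d x) \<partial>sum_iid_pmf d b)"
    using nn_integral_stream_space_sum[where g="\<lambda>c. indicator {_..<_ + c} t" and d=d and k=x]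
    by simp
  finally show ?thesis .
qed

lemma nn_integral_indicator_count_proc:
  assumes "set_pmf d \<subseteq> {1..}"
  shows "(\<integral>\<^sup>+\<omega>. indicator {k} (count_proc \<omega> t) \<partial>stream_space (measure_pmf d)) =
    (\<integral>\<^sup>+a. (\<integral>\<^sup>+c. indicator {a..<a + c} t \<partial>d) \<partial>sum_iid_pmf d k)"
  using nn_integral_indicator_count_proc_interval[OF assms, of k 1 t]
  by (simp add: sum_iid_pmf_1 atLeastLessThanSuc_atLeastAtMost)

lemma nn_integral_measure_pmf_swap:
  fixes q :: "'a::countable pmf"
  assumes "\<And>b. f b \<in> borel_measurable M"
  shows "(\<integral>\<^sup>+x. (\<integral>\<^sup>+b. f b x \<partial>q) \<partial>M) = (\<integral>\<^sup>+b. (\<integral>\<^sup>+x. f b x \<partial>M) \<partial>q)"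
proof -
  have "(\<integral>\<^sup>+x. (\<integral>\<^sup>+b. f b x \<partial>q) \<partial>M) = (\<integral>\<^sup>+x. (\<integral>\<^sup>+b. ennreal (pmf q b) * f b x \<partial>count_space UNIV) \<partial>M)"
    by (simp add: nn_integral_measure_pmf)
  also have "\<dots> = (\<integral>\<^sup>+b. (\<integral>\<^sup>+x. ennreal (pmf q b) * f b x \<partial>M) \<partial>count_space UNIV)"
    using assms by (intro nn_integral_count_space_nn_integral) auto
  also have "\<dots> = (\<integral>\<^sup>+b. (\<integral>\<^sup>+x. f b x \<partial>M) \<partial>q)"
    using assms by (simp add: nn_integral_measure_pmf nn_integral_cmult)
  finally show ?thesis .
qed

lemma emeasure_distr_count_space_singleton:
  assumes "F \<in> measurable M (count_space UNIV)"
  shows "emeasure (distr M (count_space UNIV) F) {k} = (\<integral>\<^sup>+z. indicator {k} (F z) \<partial>M)"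
  using assms by (simp add: nn_integral_distr flip: nn_integral_indicator)

lemma measurable_count_proc_subordinated:
  fixes d e :: "nat pmf"
  shows "(\<lambda>(\<omega>, \<zeta>). count_proc \<omega> (count_proc \<zeta> t))
    \<in> measurable (stream_space (measure_pmf d) \<Otimes>\<^sub>M stream_space (measure_pmf e)) (count_space UNIV)"
  by measurable

lemma emeasure_distr_count_proc_subordinated:
  fixes d e :: "nat pmf"
  assumes d: "set_pmf d \<subseteq> {1..}" and e: "set_pmf e \<subseteq> {1..}"
  shows "emeasure (distr (stream_space (measure_pmf d) \<Otimes>\<^sub>M stream_space (measure_pmf e))
      (count_space UNIV) (\<lambda>(\<omega>, \<zeta>). count_proc \<omega> (count_proc \<zeta> t))) {k} =
    (\<integral>\<^sup>+b. (\<integral>\<^sup>+x. (\<integral>\<^sup>+a. (\<integral>\<^sup>+c. indicator {a..<a + c} t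
      \<partial>sum_iid_pmf e x) \<partial>sum_iid_pmf e b) \<partial>d) \<partial>sum_iid_pmf d k)"
proof -
  let ?D = "stream_space (measure_pmf d)" and ?E = "stream_space (measure_pmf e)"
  interpret pair_sigma_finite ?D ?E
    by (intro pair_sigma_finite.intro prob_space_imp_sigma_finite
        prob_space.prob_space_stream_space prob_space_measure_pmf)
  have meas: "(\<lambda>z. indicator {k} (count_proc (fst z) (count_proc (snd z) t)) :: ennreal)
      \<in> borel_measurable (?D \<Otimes>\<^sub>M ?E)"
    by (rule measurable_compose[OF measurable_count_proc_subordinated[unfolded case_prod_beta']]) simp
  have "emeasure (distr (?D \<Otimes>\<^sub>M ?E) (count_space UNIV) (\<lambda>(\<omega>, \<zeta>). count_proc \<omega> (count_proc \<zeta> t))) {k}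
      = (\<integral>\<^sup>+z. indicator {k} (count_proc (fst z) (count_proc (snd z) t)) \<partial>(?D \<Otimes>\<^sub>M ?E))"
    by (simp add: emeasure_distr_count_space_singleton measurable_count_proc_subordinated case_prod_beta')
  also have "\<dots> = (\<integral>\<^sup>+\<zeta>. (\<integral>\<^sup>+\<omega>. indicator {k} (count_proc \<omega> (count_proc \<zeta> t)) \<partial>?D) \<partial>?E)"
    by (subst nn_integral_snd[OF meas, symmetric]) simp
  also have "\<dots> = (\<integral>\<^sup>+\<zeta>. (\<integral>\<^sup>+b. (\<integral>\<^sup>+x. indicator {b..<b + x} (count_proc \<zeta> t) \<partial>d)
      \<partial>sum_iid_pmf d k) \<partial>?E)"
    by (simp only: nn_integral_indicator_count_proc[OF d])
  also have "\<dots> = (\<integral>\<^sup>+b. (\<integral>\<^sup>+\<zeta>. (\<integral>\<^sup>+x. indicator {b..<b + x} (count_proc \<zeta> t) \<partial>d)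
      \<partial>?E) \<partial>sum_iid_pmf d k)"
    by (rule nn_integral_measure_pmf_swap) (rule measurable_compose[OF measurable_count_proc], simp)
  also have "\<dots> = (\<integral>\<^sup>+b. (\<integral>\<^sup>+x. (\<integral>\<^sup>+\<zeta>. indicator {b..<b + x} (count_proc \<zeta> t) \<partial>?E)
      \<partial>d) \<partial>sum_iid_pmf d k)"
    by (intro nn_integral_cong nn_integral_measure_pmf_swap)
      (rule measurable_compose[OF measurable_count_proc], simp)
  also have "\<dots> = (\<integral>\<^sup>+b. (\<integral>\<^sup>+x. (\<integral>\<^sup>+a. (\<integral>\<^sup>+c. indicator {a..<a + c} t
      \<partial>sum_iid_pmf e x) \<partial>sum_iid_pmf e b) \<partial>d) \<partial>sum_iid_pmf d k)"
    by (simp only: nn_integral_indicator_count_proc_interval[OF e])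
  finally show ?thesis .
qed

lemma emeasure_distr_count_proc_compound:
  fixes d e :: "nat pmf"
  assumes d: "set_pmf d \<subseteq> {1..}" and e: "set_pmf e \<subseteq> {1..}"
  shows "emeasure (distr (stream_space (measure_pmf (bind_pmf d (sum_iid_pmf e))))
      (count_space UNIV) (\<lambda>\<omega>. count_proc \<omega> t)) {k} =
    (\<integral>\<^sup>+b. (\<integral>\<^sup>+x. (\<integral>\<^sup>+a. (\<integral>\<^sup>+c. indicator {a..<a + c} t
      \<partial>sum_iid_pmf e x) \<partial>sum_iid_pmf e b) \<partial>d) \<partial>sum_iid_pmf d k)"
proof -
  let ?J = "bind_pmf d (sum_iid_pmf e)"
  have "emeasure (distr (stream_space (measure_pmf ?J)) (count_space UNIV) (\<lambda>\<omega>. count_proc \<omega> t)) {k}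
      = (\<integral>\<^sup>+a. (\<integral>\<^sup>+c. indicator {a..<a + c} t \<partial>?J) \<partial>sum_iid_pmf ?J k)"
    by (simp add: emeasure_distr_count_space_singleton
        nn_integral_indicator_count_proc[OF set_pmf_compound[OF d e]])
  also have "\<dots> = (\<integral>\<^sup>+b. (\<integral>\<^sup>+a. (\<integral>\<^sup>+x. (\<integral>\<^sup>+c. indicator {a..<a + c} t
      \<partial>sum_iid_pmf e x) \<partial>d) \<partial>sum_iid_pmf e b) \<partial>sum_iid_pmf d k)"
    by (simp add: sum_iid_pmf_compound)
  also have "\<dots> = (\<integral>\<^sup>+b. (\<integral>\<^sup>+x. (\<integral>\<^sup>+a. (\<integral>\<^sup>+c. indicator {a..<a + c} t
      \<partial>sum_iid_pmf e x) \<partial>sum_iid_pmf e b) \<partial>d) \<partial>sum_iid_pmf d k)"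
    by (intro nn_integral_cong nn_integral_measure_pmf_swap) simp
  finally show ?thesis .
qed

theorem distr_count_proc_subordinated_eq_compound:
  fixes d e :: "nat pmf"
  assumes "set_pmf d \<subseteq> {1..}" and "set_pmf e \<subseteq> {1..}"
  shows "distr (stream_space (measure_pmf d) \<Otimes>\<^sub>M stream_space (measure_pmf e))
      (count_space UNIV) (\<lambda>(\<omega>, \<zeta>). count_proc \<omega> (count_proc \<zeta> t)) =
    distr (stream_space (measure_pmf (bind_pmf d (sum_iid_pmf e))))
      (count_space UNIV) (\<lambda>\<omega>. count_proc \<omega> t)"
  using emeasure_distr_count_proc_subordinated[OF assms] emeasure_distr_count_proc_compound[OF assms]
  by (intro measure_eqI_countable[where A=UNIV]) auto

theorem mainTheorem7:
  fixes p \<alpha> :: real and t :: nat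
  assumes "0 < p" "p < 1" "0 < \<alpha>" "\<alpha> < 1"
  shows "distr (stream_space (measure_pmf (geom1_pmf p)) \<Otimes>\<^sub>M stream_space (measure_pmf (sibuya_pmf \<alpha>)))
            (count_space UNIV) (\<lambda>(\<omega>, \<zeta>). count_proc \<omega> (count_proc \<zeta> t))
       = distr (stream_space (measure_pmf (dml_A_pmf p \<alpha>)))
            (count_space UNIV) (\<lambda>\<omega>. count_proc \<omega> t)"
  unfolding dml_A_pmf_def
  using assms set_pmf_geom1_pmf set_pmf_sibuya_pmf
  by (intro distr_count_proc_subordinated_eq_compound) auto

end
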